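(* Let $u\in L^0(\mathcal{F})$ be such that $E^{\mathcal{A}}M_u$ is bounded on $L^2(\mathcal{F})$, and let $A\in\mathcal{F}$. Then the closed subspace $L^2(A)=\{f\in L^2(\mathcal{F}): f=0 \text{ a.e. on } X\setminus A\}$ reduces $E^{\mathcal{A}}M_u$ if and only if $E^{\mathcal{A}}(\chi_A)=\chi_A$ a.e. on $S(E^{\mathcal{A}}(|u|^2))$.
   Context: $(X,\mathcal{F},\mu)$ is a complete $\sigma$-finite measure space and $\mathcal{A}\subseteq\mathcal{F}$ is a $\sigma$-subalgebra such that $(X,\mathcal{A},\mu|_{\mathcal{A}})$ is $\sigma$-finite. $E^{\mathcal{A}}$ is the conditional expectation with respect to $\mathcal{A}$: for $f\ge 0$ measurable or $f\in L^2(\mathcal{F})$, $E^{\mathcal{A}}f$ is the unique $\mathcal{A}$-measurable function with $\int_B f\,d\mu=\int_B E^{\mathcal{A}}f\,d\mu$ for all $B\in\mathcal{A}$. It is assumed that $E^{\mathcal{A}}(|u|)$ is a.e. finite. $E^{\mathcal{A}}M_u$ denotes the operator $f\mapsto E^{\mathcal{A}}(uf)$; when bounded on $L^2(\mathcal{F})$ its adjoint is $M_{\bar u}E^{\mathcal{A}}$. For a measurable function $g$, $S(g)=\{x: g(x)\neq 0\}$ is its support; $\chi_A$ is the indicator of $A$. A closed subspace $M$ reduces a bounded operator $T$ if $TM\subseteq M$ and $T^*M\subseteq M$. All (in)equalities are up to $\mu$-null sets. *)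

theory Defs
  imports "HOL-Probability.Probability"
begin

definition cond_exp_c :: "'a measure \<Rightarrow> 'a measure \<Rightarrow> ('a \<Rightarrow> complex) \<Rightarrow> 'a \<Rightarrow> complex" where
  "cond_exp_c M F f = (\<lambda>x. complex_of_real (real_cond_exp M F (\<lambda>y. Re (f y)) x)
                         + \<i> * complex_of_real (real_cond_exp M F (\<lambda>y. Im (f y)) x))"

definition EM :: "'a measure \<Rightarrow> 'a measure \<Rightarrow> ('a \<Rightarrow> complex) \<Rightarrow> ('a \<Rightarrow> complex) \<Rightarrow> 'a \<Rightarrow> complex" where
  "EM M F u f = cond_exp_c M F (\<lambda>x. u x * f x)"

text \<open>Complex L^2(M), as a set of (representative) functions.\<close>
definition L2 :: "'a measure \<Rightarrow> ('a \<Rightarrow> complex) set" where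
  "L2 M = {f. f \<in> borel_measurable M \<and> integrable M (\<lambda>x. (cmod (f x))\<^sup>2)}"

definition inner_L2 :: "'a measure \<Rightarrow> ('a \<Rightarrow> complex) \<Rightarrow> ('a \<Rightarrow> complex) \<Rightarrow> complex" where
  "inner_L2 M f g = (\<integral>x. f x * cnj (g x) \<partial>M)"

definition norm2_L2 :: "'a measure \<Rightarrow> ('a \<Rightarrow> complex) \<Rightarrow> real" where
  "norm2_L2 M f = (\<integral>x. (cmod (f x))\<^sup>2 \<partial>M)"

definition bounded_on_L2 :: "'a measure \<Rightarrow> (('a \<Rightarrow> complex) \<Rightarrow> ('a \<Rightarrow> complex)) \<Rightarrow> bool" where
  "bounded_on_L2 M T \<longleftrightarrow> (\<exists>C. \<forall>f\<in>L2 M. T f \<in> L2 M \<and> norm2_L2 M (T f) \<le> C * norm2_L2 M f)"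

definition L2_on :: "'a measure \<Rightarrow> 'a set \<Rightarrow> ('a \<Rightarrow> complex) set" where
  "L2_on M A = {f \<in> L2 M. AE x in M. x \<notin> A \<longrightarrow> f x = 0}"

text \<open>A closed subspace S reduces the bounded operator T: T S \<subseteq> S and T* S \<subseteq> S.
  The adjoint T* g is (up to a.e. equality) the unique h in L^2 with
  <T f, g> = <f, h> for all f in L^2; so T* g \<in> S means such an h can be found in S.\<close>
definition reduces :: "'a measure \<Rightarrow> ('a \<Rightarrow> complex) set \<Rightarrow> (('a \<Rightarrow> complex) \<Rightarrow> ('a \<Rightarrow> complex)) \<Rightarrow> bool" where
  "reduces M S T \<longleftrightarrow>
     (\<forall>f\<in>S. T f \<in> S) \<and>
     (\<forall>g\<in>S. \<exists>h\<in>S. \<forall>f\<in>L2 M. inner_L2 M (T f) g = inner_L2 M f h)"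

end

theory Submission
  imports Defs
begin

text \<open>
  Write \<open>T = E\<^sup>A M\<^sub>u\<close> and \<open>S = S(E\<^sup>A(|u|\<^sup>2))\<close>. Testing \<open>T\<close> on \<open>\<chi>\<^sub>D u\<^sup>*\<close>, with \<open>D\<close> an
  \<open>\<A>\<close>-set of finite measure and \<open>u\<close> truncated, shows that boundedness of \<open>T\<close> forces
  \<open>E\<^sup>A(|u|\<^sup>2) \<le> \<parallel>T\<parallel>\<^sup>2\<close> a.e.; consequently \<open>T\<^sup>* g = u\<^sup>* E\<^sup>A(g)\<close> is again an operator on \<open>L\<^sup>2\<close>.

  If \<open>E\<^sup>A(\<chi>\<^sub>A) = \<chi>\<^sub>A\<close> on \<open>S\<close>, then for \<open>\<psi> \<ge> 0\<close> vanishing off \<open>A\<close> the conditional expectation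
  \<open>E\<^sup>A(\<psi>)\<close> vanishes on the \<open>\<A>\<close>-set \<open>S \<inter> {E\<^sup>A(\<chi>\<^sub>A) \<noteq> 1}\<close>, which contains \<open>S - A\<close>; off \<open>S\<close>
  we have \<open>u = 0\<close>. Hence \<open>T\<close> and \<open>T\<^sup>*\<close> both preserve \<open>L\<^sup>2(A)\<close>.

  Conversely, if \<open>L\<^sup>2(A)\<close> reduces \<open>T\<close>, so does \<open>L\<^sup>2(X - A)\<close>, and testing \<open>T\<close> on \<open>\<chi>\<^sub>A\<^sub>\<inter>\<^sub>B u\<^sup>*\<close> and
  \<open>\<chi>\<^sub>X\<^sub>-\<^sub>A\<^sub>\<inter>\<^sub>B u\<^sup>*\<close>, for \<open>\<A>\<close>-sets \<open>B\<close> of finite measure, shows that \<open>p = E\<^sup>A(\<chi>\<^sub>A |u|\<^sup>2)\<close>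
  vanishes off \<open>A\<close> and \<open>q = E\<^sup>A(\<chi>\<^sub>X\<^sub>-\<^sub>A |u|\<^sup>2)\<close> vanishes on \<open>A\<close>. As \<open>p\<close> is \<open>\<A>\<close>-measurable,
  \<open>p E\<^sup>A(\<chi>\<^sub>X\<^sub>-\<^sub>A) = E\<^sup>A(p \<chi>\<^sub>X\<^sub>-\<^sub>A) = 0\<close>, and likewise \<open>q E\<^sup>A(\<chi>\<^sub>A) = 0\<close>. On \<open>S\<close> one of \<open>p, q\<close> is nonzero, so \<open>E\<^sup>A(\<chi>\<^sub>A)\<close> is \<open>0\<close> or \<open>1\<close> there,
  and where a conditional probability vanishes the event fails a.e.
\<close>

lemma borel_measurable_cnj [measurable (raw)]:
  "f \<in> borel_measurable M \<Longrightarrow> (\<lambda>x. cnj (f x)) \<in> borel_measurable M"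
  by (rule borel_measurable_continuous_on) (auto intro: continuous_intros)

lemma integrable_mult_cnj_L2:
  assumes "f \<in> L2 M" "g \<in> L2 M"
  shows "integrable M (\<lambda>x. f x * cnj (g x))"
proof (rule Bochner_Integration.integrable_bound)
  show "integrable M (\<lambda>x. (cmod (f x))\<^sup>2 + (cmod (g x))\<^sup>2)"
    using assms by (auto simp: L2_def)
  show "(\<lambda>x. f x * cnj (g x)) \<in> borel_measurable M"
    using assms by (auto simp: L2_def)
  have le: "cmod (f x) * cmod (g x) \<le> (cmod (f x))\<^sup>2 + (cmod (g x))\<^sup>2" for x
  proof -
    have "0 \<le> cmod (f x) * cmod (g x)"
      by simp
    moreover have "2 * (cmod (f x) * cmod (g x)) \<le> (cmod (f x))\<^sup>2 + (cmod (g x))\<^sup>2"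
      using sum_squares_bound[of "cmod (f x)" "cmod (g x)"] by (simp add: mult.assoc)
    ultimately show ?thesis
      by linarith
  qed
  show "AE x in M. norm (f x * cnj (g x)) \<le> norm ((cmod (f x))\<^sup>2 + (cmod (g x))\<^sup>2)"
    by (rule AE_I2) (simp add: norm_mult le)
qed

lemma indicator_mult_cnj_in_L2:
  assumes [measurable]: "u \<in> borel_measurable M" "D \<in> sets M" "H \<in> sets M"
    and int: "integrable M (\<lambda>x. indicator D x * (indicator H x * (cmod (u x))\<^sup>2))"
  shows "(\<lambda>x. indicator (D \<inter> H) x * cnj (u x)) \<in> L2 M"
proof -
  have "(cmod (indicator (D \<inter> H) x * cnj (u x)))\<^sup>2 = indicator D x * (indicator H x * (cmod (u x))\<^sup>2)" for x
    by (simp add: indicator_def norm_mult)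
  moreover have "(\<lambda>x. indicator (D \<inter> H) x * cnj (u x)) \<in> borel_measurable M"
    by measurable
  ultimately show ?thesis
    using int by (simp add: L2_def)
qed

lemma AE_of_countable_cover:
  assumes "(\<Union>k. B k) = space M" and "\<And>k::nat. AE x in M. x \<in> B k \<longrightarrow> P x"
  shows "AE x in M. P x"
proof -
  have "AE x in M. \<forall>k. x \<in> B k \<longrightarrow> P x"
    by (rule AE_all_countable[THEN iffD2]) (use assms(2) in blast)
  with AE_space show ?thesis
    by eventually_elim (use assms(1) in blast)
qed

lemma integral_mult_complex:
  fixes a b :: "'a \<Rightarrow> complex"
  assumes "integrable M (\<lambda>x. Re (a x) * Re (b x))" "integrable M (\<lambda>x. Im (a x) * Im (b x))"
    and "integrable M (\<lambda>x. Re (a x) * Im (b x))" "integrable M (\<lambda>x. Im (a x) * Re (b x))"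
  shows "(\<integral>x. a x * b x \<partial>M) =
    complex_of_real ((\<integral>x. Re (a x) * Re (b x) \<partial>M) - (\<integral>x. Im (a x) * Im (b x) \<partial>M)) +
    \<i> * complex_of_real ((\<integral>x. Re (a x) * Im (b x) \<partial>M) + (\<integral>x. Im (a x) * Re (b x) \<partial>M))"
proof -
  define P where "P x = Re (a x) * Re (b x) - Im (a x) * Im (b x)" for x
  define Q where "Q x = Re (a x) * Im (b x) + Im (a x) * Re (b x)" for x
  have P: "integrable M P" "(\<integral>x. P x \<partial>M) = (\<integral>x. Re (a x) * Re (b x) \<partial>M) - (\<integral>x. Im (a x) * Im (b x) \<partial>M)"
    unfolding P_def using assms by auto
  have Q: "integrable M Q" "(\<integral>x. Q x \<partial>M) = (\<integral>x. Re (a x) * Im (b x) \<partial>M) + (\<integral>x. Im (a x) * Re (b x) \<partial>M)"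
    unfolding Q_def using assms by auto
  have "(\<lambda>x. a x * b x) = (\<lambda>x. complex_of_real (P x) + \<i> * complex_of_real (Q x))"
    by (intro ext) (simp add: complex_eq_iff P_def Q_def)
  then have "(\<integral>x. a x * b x \<partial>M) = complex_of_real (\<integral>x. P x \<partial>M) + \<i> * complex_of_real (\<integral>x. Q x \<partial>M)"
    using P(1) Q(1) by simp
  then show ?thesis
    unfolding P(2) Q(2) .
qed

lemma ennreal_sum_squares_bound: "2 * x * y \<le> x * x + y * (y::ennreal)"
proof (cases "x = \<top> \<or> y = \<top>")
  case True
  then show ?thesis
    by (cases "x = 0"; cases "y = 0") (auto simp: ennreal_mult_eq_top_iff)
next
  case False
  then obtain a b where x: "x = ennreal a" "0 \<le> a" and y: "y = ennreal b" "0 \<le> b"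
    by (metis enn2real_nonneg ennreal_enn2real_if)
  have "2 * a * b \<le> a * a + b * b"
    using sum_squares_bound[of a b] by (simp add: power2_eq_square)
  then have "ennreal (2 * a * b) \<le> ennreal (a * a + b * b)"
    by (rule ennreal_leI)
  then show ?thesis
    using x y by (simp add: ennreal_mult ennreal_plus[symmetric] mult.assoc)
qed

lemma null_set_of_integral_sq_le:
  fixes r :: "'a \<Rightarrow> real"
  assumes [measurable]: "D \<in> sets M" "r \<in> borel_measurable M"
    and int: "integrable M (\<lambda>x. indicator D x * r x)" "integrable M (\<lambda>x. (indicator D x * r x)\<^sup>2)"
    and gt: "\<And>x. x \<in> D \<Longrightarrow> C < r x" and "0 \<le> C"
    and le: "(\<integral>x. (indicator D x * r x)\<^sup>2 \<partial>M) \<le> C * (\<integral>x. indicator D x * r x \<partial>M)"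
  shows "D \<in> null_sets M"
proof -
  define q where "q x = (indicator D x * r x)\<^sup>2 - C * (indicator D x * r x)" for x
  have q_pos: "0 < q x" if "x \<in> D" for x
  proof -
    have "0 < r x * (r x - C)"
      using gt[OF that] \<open>0 \<le> C\<close> by (intro mult_pos_pos) auto
    then show ?thesis
      using that by (simp add: q_def power2_eq_square algebra_simps)
  qed
  have q_nonneg: "0 \<le> q x" for x
    using q_pos[of x] by (cases "x \<in> D") (auto simp: q_def)
  have q_int: "integrable M q"
    unfolding q_def using int by auto
  have "(\<integral>x. q x \<partial>M) \<le> 0"
    unfolding q_def using int le by simp
  moreover have "0 \<le> (\<integral>x. q x \<partial>M)"
    using q_nonneg by simp
  ultimately have "(\<integral>x. q x \<partial>M) = 0"
    by (rule antisym)
  then have "AE x in M. q x = 0"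
    using integral_nonneg_eq_0_iff_AE[OF q_int] q_nonneg by simp
  then have "AE x in M. x \<notin> D"
    by eventually_elim (use q_pos in force)
  then show ?thesis
    by (simp add: AE_iff_null_sets)
qed

lemma reduces_imp_invariant_compl:
  assumes [measurable]: "A \<in> sets M"
    and T: "\<And>f. f \<in> L2 M \<Longrightarrow> T f \<in> L2 M" and red: "reduces M (L2_on M A) T"
    and f: "f \<in> L2_on M (space M - A)"
  shows "T f \<in> L2_on M (space M - A)"
proof -
  have fL2: "f \<in> L2 M" and f_on: "AE x in M. x \<in> A \<longrightarrow> f x = 0"
    using f by (auto simp: L2_on_def elim: eventually_mono)
  have Tf: "T f \<in> L2 M"
    by (rule T[OF fL2])
  have [measurable]: "T f \<in> borel_measurable M"
    using Tf by (simp add: L2_def)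
  \<comment> \<open>With \<open>P\<close> the projection onto \<open>L\<^sup>2(A)\<close>: \<open>\<parallel>P T f\<parallel>\<^sup>2 = \<langle>T f, P T f\<rangle> = \<langle>f, T\<^sup>* P T f\<rangle> = 0\<close>, as \<open>T\<^sup>*\<close> preserves \<open>L\<^sup>2(A)\<close>.\<close>
  define g where "g x = indicator A x * T f x" for x
  have int_Tf: "integrable M (\<lambda>x. (cmod (T f x))\<^sup>2)"
    using Tf by (simp add: L2_def)
  have int_g: "integrable M (\<lambda>x. indicator A x * (cmod (T f x))\<^sup>2)"
    by (rule Bochner_Integration.integrable_bound[OF int_Tf]) (auto simp: indicator_def)
  have [measurable]: "g \<in> borel_measurable M"
    unfolding g_def by measurable
  have "(cmod (g x))\<^sup>2 = indicator A x * (cmod (T f x))\<^sup>2" for x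
    by (cases "x \<in> A") (simp_all add: g_def)
  with int_g have "g \<in> L2 M"
    by (simp add: L2_def)
  then have "g \<in> L2_on M A"
    by (simp add: L2_on_def g_def)
  with red obtain h where h: "h \<in> L2_on M A" and adj: "\<forall>f'\<in>L2 M. inner_L2 M (T f') g = inner_L2 M f' h"
    unfolding reduces_def by blast
  have "AE x in M. f x * cnj (h x) = 0"
    using f_on h by (auto simp: L2_on_def elim: eventually_mono)
  then have "inner_L2 M f h = 0"
    unfolding inner_L2_def by (subst integral_cong_AE[where g = "\<lambda>_. 0"]) (use fL2 h in \<open>auto simp: L2_on_def L2_def\<close>)
  moreover have "inner_L2 M (T f) g = complex_of_real (\<integral>x. indicator A x * (cmod (T f x))\<^sup>2 \<partial>M)"
    unfolding inner_L2_def integral_complex_of_real[symmetric]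
    by (rule Bochner_Integration.integral_cong) (auto simp: g_def indicator_def simp flip: complex_norm_square)
  ultimately have "(\<integral>x. indicator A x * (cmod (T f x))\<^sup>2 \<partial>M) = 0"
    using adj fL2 by simp
  then have "AE x in M. indicator A x * (cmod (T f x))\<^sup>2 = 0"
    using integral_nonneg_eq_0_iff_AE[OF int_g] by simp
  then have "AE x in M. x \<notin> space M - A \<longrightarrow> T f x = 0"
    using AE_space by eventually_elim (auto simp: indicator_def)
  with Tf show ?thesis
    by (simp add: L2_on_def)
qed

section \<open>Conditional expectation\<close>

lemma borel_measurable_cond_exp_c [measurable]:
  "cond_exp_c M F f \<in> borel_measurable F"
  "cond_exp_c M F f \<in> borel_measurable M"
  unfolding cond_exp_c_def by measurable

lemma borel_measurable_EM [measurable]: "EM M F u f \<in> borel_measurable M"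
  unfolding EM_def by measurable

lemma Re_cond_exp_c: "Re (cond_exp_c M F f x) = real_cond_exp M F (\<lambda>y. Re (f y)) x"
  and Im_cond_exp_c: "Im (cond_exp_c M F f x) = real_cond_exp M F (\<lambda>y. Im (f y)) x"
  by (simp_all add: cond_exp_c_def)

lemma cond_exp_c_cnj: "cond_exp_c M F (\<lambda>y. cnj (f y)) x = cnj (cond_exp_c M F f x)"
  by (simp add: complex_eq_iff Re_cond_exp_c Im_cond_exp_c real_cond_exp_def)

lemma cond_exp_c_of_real:
  "cond_exp_c M F (\<lambda>y. complex_of_real (f y)) x = complex_of_real (real_cond_exp M F f x)"
  by (simp add: cond_exp_c_def real_cond_exp_def)

context sigma_finite_subalgebra
begin

lemma sets_F_subset_M: "D \<in> sets F \<Longrightarrow> D \<in> sets M"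
  and space_F: "space F = space M"
  using subalg by (auto simp: subalgebra_def)

lemma finite_measure_F_cover:
  obtains B :: "nat \<Rightarrow> 'a set"
  where "\<And>k. B k \<in> sets F" "\<And>k. emeasure M (B k) < \<infinity>" "(\<Union>k. B k) = space M"
proof -
  obtain C :: "nat \<Rightarrow> 'a set" where C: "range C \<subseteq> sets (restr_to_subalg M F)"
    "(\<Union>k. C k) = space (restr_to_subalg M F)" "\<And>k. emeasure (restr_to_subalg M F) (C k) \<noteq> \<infinity>"
    using sigma_finite_measure.sigma_finite[OF sigma_fin_subalg] by metis
  have CF: "C k \<in> sets F" for k
    using C(1) sets_restr_to_subalg[OF subalg] by auto
  have fin: "emeasure M (C k) < \<infinity>" for k
    using C(3) emeasure_restr_to_subalg[OF subalg CF] by (simp add: top.not_eq_extremum)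
  have cover: "(\<Union>k. C k) = space M"
    using C(2) space_restr_to_subalg by simp
  show ?thesis
    by (rule that[OF CF fin cover])
qed

lemma AE_le_of_superlevel_null:
  fixes g :: "'a \<Rightarrow> real"
  assumes [measurable]: "g \<in> borel_measurable F"
    and null: "\<And>D. D \<in> sets F \<Longrightarrow> emeasure M D < \<infinity> \<Longrightarrow> D \<subseteq> {x. K < g x} \<Longrightarrow> D \<in> null_sets M"
  shows "AE x in M. g x \<le> K"
proof -
  obtain B :: "nat \<Rightarrow> 'a set" where B: "\<And>k. B k \<in> sets F" "\<And>k. emeasure M (B k) < \<infinity>" "(\<Union>k. B k) = space M"
    using finite_measure_F_cover by metis
  show ?thesis
  proof (rule AE_of_countable_cover[OF B(3)])
    fix k
    define D where "D = B k \<inter> {x \<in> space F. K < g x}"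
    have [measurable]: "B k \<in> sets F"
      by (rule B(1))
    have "D \<in> sets F"
      unfolding D_def by measurable
    moreover have "emeasure M D < \<infinity>"
      using emeasure_mono[of D "B k" M] sets_F_subset_M[OF B(1)] B(2)
      by (auto simp: D_def intro: le_less_trans)
    ultimately have "D \<in> null_sets M"
      by (rule null) (auto simp: D_def)
    then have "AE x in M. x \<notin> D"
      by (rule AE_not_in)
    with AE_space show "AE x in M. x \<in> B k \<longrightarrow> g x \<le> K"
      by eventually_elim (auto simp: D_def space_F)
  qed
qed

lemma nn_cond_exp_const: "AE x in M. nn_cond_exp M F (\<lambda>_. c) x = c"
  using nn_cond_exp_F_meas[of "\<lambda>_. c"] by auto

lemma AE_nn_cond_exp_eq_0_iff:
  assumes [measurable]: "f \<in> borel_measurable M" "Z \<in> sets F"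
  shows "(AE x in M. x \<in> Z \<longrightarrow> nn_cond_exp M F f x = 0) \<longleftrightarrow> (AE x in M. x \<in> Z \<longrightarrow> f x = 0)"
proof -
  have [measurable]: "Z \<in> sets M"
    using sets_F_subset_M by simp
  have "(AE x in M. x \<in> Z \<longrightarrow> nn_cond_exp M F f x = 0) \<longleftrightarrow>
      (\<integral>\<^sup>+x. indicator Z x * nn_cond_exp M F f x \<partial>M) = 0"
    by (simp add: nn_integral_0_iff_AE indicator_def)
  also have "\<dots> \<longleftrightarrow> (\<integral>\<^sup>+x. indicator Z x * f x \<partial>M) = 0"
    by (simp add: nn_cond_exp_intg)
  also have "\<dots> \<longleftrightarrow> (AE x in M. x \<in> Z \<longrightarrow> f x = 0)"
    by (simp add: nn_integral_0_iff_AE indicator_def)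
  finally show ?thesis .
qed

lemma AE_eq_0_of_nn_cond_exp_eq_0:
  assumes [measurable]: "f \<in> borel_measurable M"
  shows "AE x in M. nn_cond_exp M F f x = 0 \<longrightarrow> f x = 0"
proof -
  define Z where "Z = {x \<in> space F. nn_cond_exp M F f x = 0}"
  have Z: "Z \<in> sets F"
    unfolding Z_def by measurable
  have "AE x in M. x \<in> Z \<longrightarrow> nn_cond_exp M F f x = 0"
    by (simp add: Z_def)
  then have "AE x in M. x \<in> Z \<longrightarrow> f x = 0"
    by (rule iffD1[OF AE_nn_cond_exp_eq_0_iff[OF assms Z]])
  with AE_space show ?thesis
    by eventually_elim (simp add: Z_def space_F)
qed

lemma AE_nn_cond_exp_eq_0_mono:
  assumes f[measurable]: "f \<in> borel_measurable M" and g[measurable]: "g \<in> borel_measurable M"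
    and fg: "AE x in M. f x = 0 \<longrightarrow> g x = 0"
  shows "AE x in M. nn_cond_exp M F f x = 0 \<longrightarrow> nn_cond_exp M F g x = 0"
proof -
  define Z where "Z = {x \<in> space F. nn_cond_exp M F f x = 0}"
  have Z: "Z \<in> sets F"
    unfolding Z_def by measurable
  have "AE x in M. x \<in> Z \<longrightarrow> g x = 0"
    using AE_eq_0_of_nn_cond_exp_eq_0[OF f] fg by eventually_elim (simp add: Z_def)
  then have "AE x in M. x \<in> Z \<longrightarrow> nn_cond_exp M F g x = 0"
    by (rule iffD2[OF AE_nn_cond_exp_eq_0_iff[OF g Z]])
  with AE_space show ?thesis
    by eventually_elim (simp add: Z_def space_F)
qed

lemma AE_nn_cond_exp_eq_0_outside:
  fixes s :: "'a \<Rightarrow> ennreal"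
  assumes [measurable]: "s \<in> borel_measurable F" "A \<in> sets M" "\<psi> \<in> borel_measurable M"
    and cond: "AE x in M. s x \<noteq> 0 \<longrightarrow> nn_cond_exp M F (\<lambda>y. ennreal (indicator A y)) x = ennreal (indicator A x)"
    and vanish: "AE x in M. x \<notin> A \<longrightarrow> \<psi> x = 0"
  shows "AE x in M. s x \<noteq> 0 \<and> x \<notin> A \<longrightarrow> nn_cond_exp M F \<psi> x = 0"
proof -
  define G where "G = {x \<in> space F. s x \<noteq> 0 \<and> nn_cond_exp M F (\<lambda>y. ennreal (indicator A y)) x \<noteq> 1}"
  have G: "G \<in> sets F"
    unfolding G_def by measurable
  have "AE x in M. x \<in> G \<longrightarrow> \<psi> x = 0"
    using cond vanish by eventually_elim (auto simp: G_def)
  then have "AE x in M. x \<in> G \<longrightarrow> nn_cond_exp M F \<psi> x = 0"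
    by (rule iffD2[OF AE_nn_cond_exp_eq_0_iff[OF assms(3) G]])
  with cond AE_space show ?thesis
    by eventually_elim (auto simp: G_def space_F)
qed

lemma nn_cond_exp_mult_indicator_eq_0:
  assumes [measurable]: "p \<in> borel_measurable F" "B \<in> sets M"
    and "AE x in M. x \<in> B \<longrightarrow> p x = 0"
  shows "AE x in M. p x * nn_cond_exp M F (\<lambda>y. ennreal (indicator B y)) x = 0"
proof -
  have [measurable]: "p \<in> borel_measurable M"
    by (rule measurable_from_subalg[OF subalg]) simp
  have "AE x in M. p x * nn_cond_exp M F (\<lambda>y. ennreal (indicator B y)) x
      = nn_cond_exp M F (\<lambda>y. p y * ennreal (indicator B y)) x"
    by (rule nn_cond_exp_prod) measurable
  moreover have "AE x in M. nn_cond_exp M F (\<lambda>y. p y * ennreal (indicator B y)) x = nn_cond_exp M F (\<lambda>_. 0) x"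
    by (rule nn_cond_exp_cong) (use assms(3) in \<open>auto simp: indicator_def elim: eventually_mono\<close>)
  ultimately show ?thesis
    using nn_cond_exp_const[of 0] by eventually_elim simp
qed

lemma nn_cond_exp_indicator_add_compl:
  assumes [measurable]: "w \<in> borel_measurable M" "A \<in> sets M"
  shows "AE x in M. nn_cond_exp M F (\<lambda>y. indicator A y * w y) x
      + nn_cond_exp M F (\<lambda>y. indicator (space M - A) y * w y) x = nn_cond_exp M F w x"
proof -
  have "AE x in M. nn_cond_exp M F (\<lambda>y. indicator A y * w y) x
      + nn_cond_exp M F (\<lambda>y. indicator (space M - A) y * w y) x
      = nn_cond_exp M F (\<lambda>y. indicator A y * w y + indicator (space M - A) y * w y) x"
    by (rule nn_cond_exp_sum) measurable
  moreover have "AE x in M. nn_cond_exp M F (\<lambda>y. indicator A y * w y + indicator (space M - A) y * w y) x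
      = nn_cond_exp M F w x"
    by (rule nn_cond_exp_cong) (use AE_space in \<open>auto simp: indicator_def elim: eventually_mono\<close>)
  ultimately show ?thesis
    by eventually_elim simp
qed

lemma set_nn_integral_le_of_nn_cond_exp_le:
  assumes [measurable]: "w \<in> borel_measurable M" "B \<in> sets F"
    and "AE x in M. nn_cond_exp M F w x \<le> ennreal K"
  shows "(\<integral>\<^sup>+x. indicator B x * w x \<partial>M) \<le> ennreal K * emeasure M B"
proof -
  have [measurable]: "B \<in> sets M"
    by (rule sets_F_subset_M) simp
  have "(\<integral>\<^sup>+x. indicator B x * w x \<partial>M) = (\<integral>\<^sup>+x. indicator B x * nn_cond_exp M F w x \<partial>M)"
    by (rule nn_cond_exp_intg[symmetric]) measurable
  also have "\<dots> \<le> (\<integral>\<^sup>+x. ennreal K * indicator B x \<partial>M)"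
    by (rule nn_integral_mono_AE) (use assms(3) in \<open>auto simp: indicator_def elim: eventually_mono\<close>)
  also have "\<dots> = ennreal K * emeasure M B"
    by (rule nn_integral_cmult_indicator) simp
  finally show ?thesis .
qed

lemma nn_cond_exp_SUP:
  assumes [measurable]: "\<And>i. f i \<in> borel_measurable M" and "incseq f"
  shows "AE x in M. nn_cond_exp M F (\<lambda>y. SUP i. f i y) x = (SUP i. nn_cond_exp M F (f i) x)"
proof -
  have inc: "AE x in M. nn_cond_exp M F (f i) x \<le> nn_cond_exp M F (f (Suc i)) x" for i
    by (rule nn_cond_exp_mono) (use \<open>incseq f\<close> in \<open>auto simp: incseq_Suc_iff le_fun_def\<close>)
  have "AE x in M. (SUP i. nn_cond_exp M F (f i) x) = nn_cond_exp M F (\<lambda>y. SUP i. f i y) x"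
  proof (rule nn_cond_exp_charact)
    fix A assume [measurable]: "A \<in> sets F"
    then have [measurable]: "A \<in> sets M"
      by (rule sets_F_subset_M)
    have "incseq (\<lambda>i x. f i x * indicator A x)"
      using \<open>incseq f\<close> by (auto simp: incseq_def le_fun_def intro: mult_right_mono)
    then have "(\<integral>\<^sup>+x\<in>A. (SUP i. f i x) \<partial>M) = (SUP i. \<integral>\<^sup>+x. f i x * indicator A x \<partial>M)"
      unfolding SUP_mult_right_ennreal by (rule nn_integral_monotone_convergence_SUP) measurable
    also have "\<dots> = (SUP i. \<integral>\<^sup>+x. nn_cond_exp M F (f i) x * indicator A x \<partial>M)"
    proof (rule SUP_cong[OF refl])
      fix i
      have "(\<integral>\<^sup>+x. indicator A x * nn_cond_exp M F (f i) x \<partial>M) = (\<integral>\<^sup>+x. indicator A x * f i x \<partial>M)"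
        by (rule nn_cond_exp_intg) measurable
      then show "(\<integral>\<^sup>+x. f i x * indicator A x \<partial>M) = (\<integral>\<^sup>+x. nn_cond_exp M F (f i) x * indicator A x \<partial>M)"
        by (simp only: mult.commute)
    qed
    also have "\<dots> = (\<integral>\<^sup>+x\<in>A. (SUP i. nn_cond_exp M F (f i) x) \<partial>M)"
      unfolding SUP_mult_right_ennreal
    proof (rule nn_integral_monotone_convergence_SUP_AE[symmetric])
      fix i
      show "AE x in M. nn_cond_exp M F (f i) x * indicator A x \<le> nn_cond_exp M F (f (Suc i)) x * indicator A x"
        using inc[of i] by eventually_elim (rule mult_right_mono, auto)
    qed measurable
    finally show "(\<integral>\<^sup>+x\<in>A. (SUP i. f i x) \<partial>M) = (\<integral>\<^sup>+x\<in>A. (SUP i. nn_cond_exp M F (f i) x) \<partial>M)" .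
  qed measurable
  then show ?thesis
    by eventually_elim (rule sym)
qed

lemma nn_cond_exp_sq_le:
  assumes [measurable]: "f \<in> borel_measurable M"
  shows "AE x in M. (nn_cond_exp M F f x)\<^sup>2 \<le> nn_cond_exp M F (\<lambda>y. (f y)\<^sup>2) x"
proof -
  define e where "e = nn_cond_exp M F f"
  have [measurable]: "e \<in> borel_measurable F"
    unfolding e_def by simp
  \<comment> \<open>Condition the pointwise bound \<open>2 t f \<le> t\<^sup>2 + f\<^sup>2\<close> on the \<open>F\<close>-measurable choice \<open>t = E f\<close>
    (replaced by \<open>1\<close> where \<open>E f = \<top>\<close>), then cancel \<open>t\<^sup>2\<close>.\<close>
  define t where "t x = (if e x = \<top> then 1 else e x)" for x
  have tF[measurable]: "t \<in> borel_measurable F"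
    unfolding t_def by measurable
  have [measurable]: "t \<in> borel_measurable M"
    by (rule measurable_from_subalg[OF subalg tF])
  have amgm: "AE x in M. nn_cond_exp M F (\<lambda>y. 2 * t y * f y) x \<le> nn_cond_exp M F (\<lambda>y. t y * t y + f y * f y) x"
    by (rule nn_cond_exp_mono) (auto intro: ennreal_sum_squares_bound)
  have mult: "AE x in M. (2 * t x) * e x = nn_cond_exp M F (\<lambda>y. 2 * t y * f y) x"
    unfolding e_def by (rule nn_cond_exp_prod) auto
  have add: "AE x in M. nn_cond_exp M F (\<lambda>y. t y * t y) x + nn_cond_exp M F (\<lambda>y. f y * f y) x
      = nn_cond_exp M F (\<lambda>y. t y * t y + f y * f y) x"
    by (rule nn_cond_exp_sum) auto
  have t_sq: "AE x in M. t x * t x = nn_cond_exp M F (\<lambda>y. t y * t y) x"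
    by (rule nn_cond_exp_F_meas) auto
  from amgm mult add t_sq show ?thesis
    unfolding power2_eq_square e_def[symmetric]
  proof eventually_elim
    case (elim x)
    let ?s = "nn_cond_exp M F (\<lambda>y. f y * f y) x"
    have le: "2 * t x * e x \<le> t x * t x + ?s"
      using elim by (simp add: add.commute)
    show ?case
    proof (cases "e x = \<top>")
      case True
      with le have "\<top> \<le> 1 + ?s"
        by (simp add: t_def ennreal_mult_eq_top_iff)
      then show ?thesis
        by (simp add: top_unique)
    next
      case False
      then have "t x = e x" and fin: "e x * e x \<noteq> \<top>"
        by (simp_all add: t_def ennreal_mult_eq_top_iff)
      with le have "e x * e x + e x * e x \<le> e x * e x + ?s"
        by (simp add: mult_2 distrib_right mult.assoc)
      with fin show ?thesis
        by (simp add: ennreal_add_left_cancel_le)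
    qed
  qed
qed

lemma real_cond_exp_nonneg_eq:
  assumes [measurable]: "f \<in> borel_measurable M" and "\<And>x. 0 \<le> f x"
  shows "AE x in M. real_cond_exp M F f x = enn2real (nn_cond_exp M F (\<lambda>y. ennreal (f y)) x)"
proof -
  have "(\<lambda>y. ennreal (- f y)) = (\<lambda>_. 0)"
    using assms(2) by (simp add: ennreal_neg)
  with nn_cond_exp_const[of 0] show ?thesis
    unfolding real_cond_exp_def by (auto elim: eventually_mono)
qed

lemma real_cond_exp_sq_le:
  assumes [measurable]: "f \<in> borel_measurable M"
  shows "AE x in M. ennreal ((real_cond_exp M F f x)\<^sup>2) \<le> nn_cond_exp M F (\<lambda>y. ennreal ((f y)\<^sup>2)) x"
proof -
  have sq: "(\<lambda>y. (ennreal \<bar>f y\<bar>)\<^sup>2) = (\<lambda>y. ennreal ((f y)\<^sup>2))"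
    by (simp add: ennreal_power)
  have jensen: "AE x in M. (nn_cond_exp M F (\<lambda>y. ennreal \<bar>f y\<bar>) x)\<^sup>2 \<le> nn_cond_exp M F (\<lambda>y. ennreal ((f y)\<^sup>2)) x"
    unfolding sq[symmetric] by (rule nn_cond_exp_sq_le) measurable
  from real_cond_exp_abs[OF assms] jensen show ?thesis
  proof eventually_elim
    case (elim x)
    have "ennreal ((real_cond_exp M F f x)\<^sup>2) = (ennreal \<bar>real_cond_exp M F f x\<bar>)\<^sup>2"
      by (simp add: ennreal_power)
    also have "\<dots> \<le> (nn_cond_exp M F (\<lambda>y. ennreal \<bar>f y\<bar>) x)\<^sup>2"
      using elim(1) by (rule power_mono) simp
    also have "\<dots> \<le> nn_cond_exp M F (\<lambda>y. ennreal ((f y)\<^sup>2)) x"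
      by (rule elim(2))
    finally show ?case .
  qed
qed

lemma cond_exp_c_norm_sq_le:
  assumes [measurable]: "f \<in> borel_measurable M"
  shows "AE x in M. ennreal ((cmod (cond_exp_c M F f x))\<^sup>2) \<le> nn_cond_exp M F (\<lambda>y. ennreal ((cmod (f y))\<^sup>2)) x"
proof -
  have split: "(\<lambda>y. ennreal ((Re (f y))\<^sup>2) + ennreal ((Im (f y))\<^sup>2)) = (\<lambda>y. ennreal ((cmod (f y))\<^sup>2))"
    by (simp add: cmod_power2 ennreal_plus[symmetric] del: ennreal_plus)
  have Re: "AE x in M. ennreal ((real_cond_exp M F (\<lambda>y. Re (f y)) x)\<^sup>2) \<le> nn_cond_exp M F (\<lambda>y. ennreal ((Re (f y))\<^sup>2)) x"
    and Im: "AE x in M. ennreal ((real_cond_exp M F (\<lambda>y. Im (f y)) x)\<^sup>2) \<le> nn_cond_exp M F (\<lambda>y. ennreal ((Im (f y))\<^sup>2)) x"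
    by (rule real_cond_exp_sq_le, measurable)+
  have sum: "AE x in M. nn_cond_exp M F (\<lambda>y. ennreal ((Re (f y))\<^sup>2)) x + nn_cond_exp M F (\<lambda>y. ennreal ((Im (f y))\<^sup>2)) x
      = nn_cond_exp M F (\<lambda>y. ennreal ((cmod (f y))\<^sup>2)) x"
    unfolding split[symmetric] by (rule nn_cond_exp_sum) measurable
  from Re Im sum show ?thesis
  proof eventually_elim
    case (elim x)
    have "ennreal ((cmod (cond_exp_c M F f x))\<^sup>2)
        = ennreal ((Re (cond_exp_c M F f x))\<^sup>2) + ennreal ((Im (cond_exp_c M F f x))\<^sup>2)"
      by (simp add: cmod_power2 ennreal_plus[symmetric] del: ennreal_plus)
    also have "\<dots> \<le> nn_cond_exp M F (\<lambda>y. ennreal ((Re (f y))\<^sup>2)) x + nn_cond_exp M F (\<lambda>y. ennreal ((Im (f y))\<^sup>2)) x"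
      using elim(1,2) by (simp add: Re_cond_exp_c Im_cond_exp_c add_mono)
    finally show ?case
      using elim(3) by simp
  qed
qed

lemma cond_exp_c_eq_0_of_nn_cond_exp_norm_eq_0:
  assumes [measurable]: "f \<in> borel_measurable M"
  shows "AE x in M. nn_cond_exp M F (\<lambda>y. ennreal (cmod (f y))) x = 0 \<longrightarrow> cond_exp_c M F f x = 0"
proof -
  have part: "AE x in M. ennreal \<bar>real_cond_exp M F g x\<bar> \<le> nn_cond_exp M F (\<lambda>y. ennreal (cmod (f y))) x"
    if g[measurable]: "g \<in> borel_measurable M" and le: "\<And>y. \<bar>g y\<bar> \<le> cmod (f y)" for g
  proof -
    have "AE x in M. nn_cond_exp M F (\<lambda>y. ennreal \<bar>g y\<bar>) x \<le> nn_cond_exp M F (\<lambda>y. ennreal (cmod (f y))) x"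
      by (rule nn_cond_exp_mono) (simp_all add: le)
    with real_cond_exp_abs[OF g] show ?thesis
      by eventually_elim (rule order_trans)
  qed
  have Re: "AE x in M. ennreal \<bar>real_cond_exp M F (\<lambda>y. Re (f y)) x\<bar> \<le> nn_cond_exp M F (\<lambda>y. ennreal (cmod (f y))) x"
    by (rule part) (simp_all add: abs_Re_le_cmod)
  have Im: "AE x in M. ennreal \<bar>real_cond_exp M F (\<lambda>y. Im (f y)) x\<bar> \<le> nn_cond_exp M F (\<lambda>y. ennreal (cmod (f y))) x"
    by (rule part) (simp_all add: abs_Im_le_cmod)
  from Re Im show ?thesis
    by eventually_elim (auto simp: complex_eq_iff Re_cond_exp_c Im_cond_exp_c)
qed

lemma cond_exp_c_intg:
  assumes int: "integrable M (\<lambda>x. h x * f x)"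
    and [measurable]: "h \<in> borel_measurable F" "f \<in> borel_measurable M"
  shows "(\<integral>x. h x * cond_exp_c M F f x \<partial>M) = (\<integral>x. h x * f x \<partial>M)"
proof -
  have hM[measurable]: "h \<in> borel_measurable M"
    by (rule measurable_from_subalg[OF subalg]) simp
  have part: "integrable M (\<lambda>x. a x * b x) \<and> integrable M (\<lambda>x. a x * real_cond_exp M F b x) \<and>
      (\<integral>x. a x * real_cond_exp M F b x \<partial>M) = (\<integral>x. a x * b x \<partial>M)"
    if [measurable]: "a \<in> borel_measurable F" "b \<in> borel_measurable M"
      and le: "\<And>x. \<bar>a x * b x\<bar> \<le> cmod (h x * f x)" for a b
  proof -
    have [measurable]: "a \<in> borel_measurable M"
      by (rule measurable_from_subalg[OF subalg]) simp
    have ab: "integrable M (\<lambda>x. a x * b x)"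
      by (rule Bochner_Integration.integrable_bound[OF int]) (use le in auto)
    then show ?thesis
      using real_cond_exp_intg[OF ab] by simp
  qed
  have abs_le: "\<bar>p (h x) * q (f x)\<bar> \<le> cmod (h x * f x)"
    if "\<And>z. \<bar>p z\<bar> \<le> cmod z" "\<And>z. \<bar>q z\<bar> \<le> cmod z" for p q :: "complex \<Rightarrow> real" and x
    unfolding abs_mult norm_mult using that by (intro mult_mono) auto
  note parts = part[of "\<lambda>x. Re (h x)" "\<lambda>x. Re (f x)"] part[of "\<lambda>x. Im (h x)" "\<lambda>x. Im (f x)"]
    part[of "\<lambda>x. Re (h x)" "\<lambda>x. Im (f x)"] part[of "\<lambda>x. Im (h x)" "\<lambda>x. Re (f x)"]
  note bounds = abs_le[of Re Re] abs_le[of Im Im] abs_le[of Re Im] abs_le[of Im Re]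
  have P: "integrable M (\<lambda>x. p (h x) * q (f x)) \<and> integrable M (\<lambda>x. p (h x) * real_cond_exp M F (\<lambda>y. q (f y)) x) \<and>
      (\<integral>x. p (h x) * real_cond_exp M F (\<lambda>y. q (f y)) x \<partial>M) = (\<integral>x. p (h x) * q (f x) \<partial>M)"
    if "p \<in> {Re, Im}" "q \<in> {Re, Im}" for p q
    using that parts bounds by (auto simp: abs_Re_le_cmod abs_Im_le_cmod)
  have "(\<integral>x. h x * cond_exp_c M F f x \<partial>M) =
    complex_of_real ((\<integral>x. Re (h x) * Re (cond_exp_c M F f x) \<partial>M) - (\<integral>x. Im (h x) * Im (cond_exp_c M F f x) \<partial>M)) +
    \<i> * complex_of_real ((\<integral>x. Re (h x) * Im (cond_exp_c M F f x) \<partial>M) + (\<integral>x. Im (h x) * Re (cond_exp_c M F f x) \<partial>M))"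
    by (rule integral_mult_complex) (use P in \<open>simp_all add: Re_cond_exp_c Im_cond_exp_c\<close>)
  also have "\<dots> =
    complex_of_real ((\<integral>x. Re (h x) * Re (f x) \<partial>M) - (\<integral>x. Im (h x) * Im (f x) \<partial>M)) +
    \<i> * complex_of_real ((\<integral>x. Re (h x) * Im (f x) \<partial>M) + (\<integral>x. Im (h x) * Re (f x) \<partial>M))"
    using P by (simp add: Re_cond_exp_c Im_cond_exp_c)
  also have "\<dots> = (\<integral>x. h x * f x \<partial>M)"
    by (rule integral_mult_complex[symmetric]) (use P in simp_all)
  finally show ?thesis .
qed

section \<open>The operator \<open>E\<^sup>A M\<^sub>u\<close>\<close>

lemma inner_L2_EM_adjoint:
  assumes [measurable]: "u \<in> borel_measurable M"
    and f: "f \<in> L2 M" and g: "g \<in> L2 M" and Tf: "EM M F u f \<in> L2 M"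
    and h: "(\<lambda>x. cnj (u x) * cond_exp_c M F g x) \<in> L2 M"
  shows "inner_L2 M (EM M F u f) g = inner_L2 M f (\<lambda>x. cnj (u x) * cond_exp_c M F g x)"
proof -
  have [measurable]: "f \<in> borel_measurable M" "g \<in> borel_measurable M"
    using f g by (simp_all add: L2_def)
  have "inner_L2 M (EM M F u f) g = (\<integral>x. EM M F u f x * cond_exp_c M F (\<lambda>y. cnj (g y)) x \<partial>M)"
    unfolding inner_L2_def EM_def
    by (rule cond_exp_c_intg[symmetric]) (use integrable_mult_cnj_L2[OF Tf g] in \<open>simp_all add: EM_def\<close>)
  also have "\<dots> = (\<integral>x. cnj (cond_exp_c M F g x) * cond_exp_c M F (\<lambda>y. u y * f y) x \<partial>M)"
    by (simp add: cond_exp_c_cnj EM_def mult.commute)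
  also have "\<dots> = (\<integral>x. cnj (cond_exp_c M F g x) * (u x * f x) \<partial>M)"
  proof (rule cond_exp_c_intg)
    show "integrable M (\<lambda>x. cnj (cond_exp_c M F g x) * (u x * f x))"
      using integrable_mult_cnj_L2[OF f h] by (simp add: mult_ac)
  qed measurable
  also have "\<dots> = inner_L2 M f (\<lambda>x. cnj (u x) * cond_exp_c M F g x)"
    by (simp add: inner_L2_def mult_ac)
  finally show ?thesis .
qed

lemma cnj_mult_cond_exp_c_in_L2:
  assumes [measurable]: "u \<in> borel_measurable M"
    and K: "AE x in M. nn_cond_exp M F (\<lambda>y. ennreal ((cmod (u y))\<^sup>2)) x \<le> ennreal K"
    and g: "g \<in> L2 M"
  shows "(\<lambda>x. cnj (u x) * cond_exp_c M F g x) \<in> L2 M"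
proof -
  have gM[measurable]: "g \<in> borel_measurable M"
    using g by (simp add: L2_def)
  let ?Eg = "\<lambda>x. ennreal ((cmod (cond_exp_c M F g x))\<^sup>2)"
  have "(\<integral>\<^sup>+x. ennreal ((cmod (cnj (u x) * cond_exp_c M F g x))\<^sup>2) \<partial>M)
      = (\<integral>\<^sup>+x. ?Eg x * ennreal ((cmod (u x))\<^sup>2) \<partial>M)"
    by (simp add: norm_mult power_mult_distrib ennreal_mult mult.commute)
  also have "\<dots> = (\<integral>\<^sup>+x. ?Eg x * nn_cond_exp M F (\<lambda>y. ennreal ((cmod (u y))\<^sup>2)) x \<partial>M)"
    by (rule nn_cond_exp_intg[symmetric]) measurable
  also have "\<dots> \<le> (\<integral>\<^sup>+x. ennreal K * nn_cond_exp M F (\<lambda>y. ennreal ((cmod (g y))\<^sup>2)) x \<partial>M)"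
  proof (rule nn_integral_mono_AE)
    show "AE x in M. ?Eg x * nn_cond_exp M F (\<lambda>y. ennreal ((cmod (u y))\<^sup>2)) x
        \<le> ennreal K * nn_cond_exp M F (\<lambda>y. ennreal ((cmod (g y))\<^sup>2)) x"
      using cond_exp_c_norm_sq_le[OF gM] K
      by eventually_elim (simp add: mult.commute[of "ennreal K"] mult_mono)
  qed
  also have "\<dots> = ennreal K * (\<integral>\<^sup>+x. ennreal ((cmod (g x))\<^sup>2) \<partial>M)"
    using nn_cond_exp_intg[of "\<lambda>_. 1" "\<lambda>y. ennreal ((cmod (g y))\<^sup>2)"] by (simp add: nn_integral_cmult)
  also have "\<dots> < \<infinity>"
    using g by (simp add: L2_def integrable_iff_bounded ennreal_mult_less_top)
  finally show ?thesis
    unfolding L2_def by (auto intro: integrableI_nonneg)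
qed

lemma EM_indicator_mult_cnj:
  assumes [measurable]: "u \<in> borel_measurable M" "H \<in> sets M" "D \<in> sets F"
    and int: "integrable M (\<lambda>x. indicator D x * (indicator H x * (cmod (u x))\<^sup>2))"
  shows "AE x in M. EM M F u (\<lambda>y. indicator (D \<inter> H) y * cnj (u y)) x
    = complex_of_real (indicator D x * real_cond_exp M F (\<lambda>y. indicator H y * (cmod (u y))\<^sup>2) x)"
proof -
  have uf: "u x * (indicator (D \<inter> H) x * cnj (u x))
      = complex_of_real (indicator D x * (indicator H x * (cmod (u x))\<^sup>2))" for x
    by (simp add: indicator_def flip: complex_norm_square)
  have "AE x in M. real_cond_exp M F (\<lambda>x. indicator D x * (indicator H x * (cmod (u x))\<^sup>2)) x
      = indicator D x * real_cond_exp M F (\<lambda>y. indicator H y * (cmod (u y))\<^sup>2) x"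
  proof (rule real_cond_exp_mult)
    show "integrable M (\<lambda>x. indicator D x * (indicator H x * (cmod (u x))\<^sup>2))"
      by (fact int)
  qed measurable
  then show ?thesis
    by eventually_elim (simp only: EM_def uf cond_exp_c_of_real)
qed

lemma EM_test_function_bound:
  assumes [measurable]: "u \<in> borel_measurable M" "H \<in> sets M" "D \<in> sets F"
    and "emeasure M D < \<infinity>" and bounded: "\<And>x. x \<in> H \<Longrightarrow> cmod (u x) \<le> c"
    and T: "\<And>f. f \<in> L2 M \<Longrightarrow> EM M F u f \<in> L2 M \<and> norm2_L2 M (EM M F u f) \<le> C * norm2_L2 M f"
  defines "r \<equiv> real_cond_exp M F (\<lambda>y. indicator H y * (cmod (u y))\<^sup>2)"
  shows "integrable M (\<lambda>x. indicator D x * r x)" "integrable M (\<lambda>x. (indicator D x * r x)\<^sup>2)"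
    and "(\<integral>x. (indicator D x * r x)\<^sup>2 \<partial>M) \<le> C * (\<integral>x. indicator D x * r x \<partial>M)"
proof -
  define w where "w y = indicator H y * (cmod (u y))\<^sup>2" for y
  define f where "f x = indicator (D \<inter> H) x * cnj (u x)" for x
  have [measurable]: "D \<in> sets M"
    by (rule sets_F_subset_M) simp
  have [measurable]: "w \<in> borel_measurable M"
    unfolding w_def by measurable
  have w_le: "w y \<le> c\<^sup>2" for y
    using bounded[of y] by (cases "y \<in> H") (auto simp: w_def intro: power_mono)
  have int_w: "integrable M (\<lambda>x. indicator D x * w x)"
  proof (rule Bochner_Integration.integrable_bound)
    show "integrable M (\<lambda>x. c\<^sup>2 * indicator D x)"
      using \<open>emeasure M D < \<infinity>\<close> by simp
    show "AE x in M. norm (indicator D x * w x) \<le> norm (c\<^sup>2 * indicator D x)"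
      using w_le by (auto simp: indicator_def w_def)
  qed measurable
  have f: "f \<in> L2 M"
    unfolding f_def by (rule indicator_mult_cnj_in_L2) (use int_w in \<open>simp_all add: w_def\<close>)
  have "AE x in M. EM M F u f x = complex_of_real (indicator D x * r x)"
    unfolding f_def r_def by (rule EM_indicator_mult_cnj[OF assms(1-3)]) (use int_w in \<open>simp add: w_def\<close>)
  then have Tf_sq: "AE x in M. (cmod (EM M F u f x))\<^sup>2 = (indicator D x * r x)\<^sup>2"
    by eventually_elim (simp del: of_real_mult)
  have int_r: "integrable M (\<lambda>x. indicator D x * r x)"
    and int_eq: "(\<integral>x. indicator D x * r x \<partial>M) = (\<integral>x. indicator D x * w x \<partial>M)"
    using real_cond_exp_intg[OF int_w] by (simp_all add: r_def w_def)
  show "integrable M (\<lambda>x. indicator D x * r x)"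
    by (fact int_r)
  have "integrable M (\<lambda>x. (cmod (EM M F u f x))\<^sup>2)"
    using T[OF f] by (simp add: L2_def)
  then show "integrable M (\<lambda>x. (indicator D x * r x)\<^sup>2)"
    by (rule integrable_cong_AE_imp[OF _ _ Tf_sq]) (simp add: r_def)
  have "norm2_L2 M (EM M F u f) = (\<integral>x. (indicator D x * r x)\<^sup>2 \<partial>M)"
    unfolding norm2_L2_def by (rule integral_cong_AE[OF _ _ Tf_sq]) (simp_all add: r_def)
  moreover have "norm2_L2 M f = (\<integral>x. indicator D x * r x \<partial>M)"
    unfolding norm2_L2_def int_eq f_def w_def
    by (rule Bochner_Integration.integral_cong) (simp_all add: indicator_def norm_mult)
  ultimately show "(\<integral>x. (indicator D x * r x)\<^sup>2 \<partial>M) \<le> C * (\<integral>x. indicator D x * r x \<partial>M)"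
    using T[OF f] by simp
qed

lemma nn_cond_exp_norm_sq_indicator_le:
  assumes [measurable]: "u \<in> borel_measurable M" "H \<in> sets M"
    and bounded: "\<And>x. x \<in> H \<Longrightarrow> cmod (u x) \<le> c"
    and T: "\<And>f. f \<in> L2 M \<Longrightarrow> EM M F u f \<in> L2 M \<and> norm2_L2 M (EM M F u f) \<le> C * norm2_L2 M f"
    and "0 \<le> C"
  shows "AE x in M. nn_cond_exp M F (\<lambda>y. ennreal (indicator H y * (cmod (u y))\<^sup>2)) x \<le> ennreal C"
proof -
  define w where "w y = indicator H y * (cmod (u y))\<^sup>2" for y
  define r where "r = real_cond_exp M F w"
  have [measurable]: "w \<in> borel_measurable M"
    unfolding w_def by measurable
  have [measurable]: "r \<in> borel_measurable F" "r \<in> borel_measurable M"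
    unfolding r_def by measurable
  have w_nonneg: "0 \<le> w y" and w_le: "w y \<le> c\<^sup>2" for y
    using bounded[of y] by (cases "y \<in> H"; auto simp: w_def intro: power_mono)+
  have "AE x in M. r x \<le> C"
  proof (rule AE_le_of_superlevel_null)
    fix D assume D: "D \<in> sets F" "emeasure M D < \<infinity>" "D \<subseteq> {x. C < r x}"
    note bound = EM_test_function_bound[OF assms(1,2) D(1,2) bounded T, folded w_def r_def]
    show "D \<in> null_sets M"
    proof (rule null_set_of_integral_sq_le[OF _ _ bound(1,2) _ \<open>0 \<le> C\<close> bound(3)])
      show "D \<in> sets M"
        using D(1) by (rule sets_F_subset_M)
    qed (use D(3) in auto)
  qed measurable
  moreover have "AE x in M. r x = enn2real (nn_cond_exp M F (\<lambda>y. ennreal (w y)) x)"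
    unfolding r_def by (rule real_cond_exp_nonneg_eq) (simp_all add: w_nonneg)
  moreover have "AE x in M. nn_cond_exp M F (\<lambda>y. ennreal (w y)) x \<le> nn_cond_exp M F (\<lambda>_. ennreal (c\<^sup>2)) x"
    by (rule nn_cond_exp_mono) (simp_all add: w_le)
  moreover note nn_cond_exp_const[of "ennreal (c\<^sup>2)"]
  ultimately show ?thesis
    unfolding w_def[symmetric]
  proof eventually_elim
    case (elim x)
    have "nn_cond_exp M F (\<lambda>y. ennreal (w y)) x \<noteq> \<top>"
      using elim(3,4) by (metis ennreal_neq_top top_unique)
    with elim(2) have "nn_cond_exp M F (\<lambda>y. ennreal (w y)) x = ennreal (r x)"
      by (simp add: ennreal_enn2real_if)
    with elim(1) show ?case
      by (simp add: ennreal_leI)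
  qed
qed

lemma nn_cond_exp_norm_sq_le_of_truncations:
  assumes [measurable]: "u \<in> borel_measurable M"
    and trunc: "\<And>n. AE x in M. nn_cond_exp M F
      (\<lambda>y. ennreal (indicator {x \<in> space M. cmod (u x) \<le> real n} y * (cmod (u y))\<^sup>2)) x \<le> K"
  shows "AE x in M. nn_cond_exp M F (\<lambda>y. ennreal ((cmod (u y))\<^sup>2)) x \<le> K"
proof -
  define v where "v n y = ennreal (indicator {x \<in> space M. cmod (u x) \<le> real n} y * (cmod (u y))\<^sup>2)" for n y
  have [measurable]: "v n \<in> borel_measurable M" for n
    unfolding v_def by measurable
  have "incseq v"
    by (auto simp: incseq_def le_fun_def v_def indicator_def intro!: ennreal_leI)
  have SUP_v: "(SUP n. v n y) = ennreal ((cmod (u y))\<^sup>2)" if "y \<in> space M" for y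
  proof (rule antisym)
    show "(SUP n. v n y) \<le> ennreal ((cmod (u y))\<^sup>2)"
      by (rule SUP_least) (auto simp: v_def indicator_def)
    have "v (nat \<lceil>cmod (u y)\<rceil>) y = ennreal ((cmod (u y))\<^sup>2)"
      using that by (simp add: v_def real_nat_ceiling_ge)
    then show "ennreal ((cmod (u y))\<^sup>2) \<le> (SUP n. v n y)"
      by (metis SUP_upper UNIV_I)
  qed
  have "AE x in M. nn_cond_exp M F (\<lambda>y. ennreal ((cmod (u y))\<^sup>2)) x = nn_cond_exp M F (\<lambda>y. SUP n. v n y) x"
    by (rule nn_cond_exp_cong) (simp_all add: SUP_v)
  moreover have "AE x in M. nn_cond_exp M F (\<lambda>y. SUP n. v n y) x = (SUP n. nn_cond_exp M F (v n) x)"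
    by (rule nn_cond_exp_SUP) (simp_all add: \<open>incseq v\<close>)
  moreover have "AE x in M. \<forall>n. nn_cond_exp M F (v n) x \<le> K"
    unfolding AE_all_countable v_def by (intro allI trunc)
  ultimately show ?thesis
    by eventually_elim (simp add: SUP_least)
qed

lemma nn_cond_exp_norm_sq_le_of_bounded:
  assumes [measurable]: "u \<in> borel_measurable M" and "bounded_on_L2 M (EM M F u)"
  obtains K where "AE x in M. nn_cond_exp M F (\<lambda>y. ennreal ((cmod (u y))\<^sup>2)) x \<le> ennreal K"
proof -
  obtain C where C: "\<And>f. f \<in> L2 M \<Longrightarrow> EM M F u f \<in> L2 M \<and> norm2_L2 M (EM M F u f) \<le> C * norm2_L2 M f"
    using assms(2) unfolding bounded_on_L2_def by blast
  define K where "K = max C 0"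
  have K: "EM M F u f \<in> L2 M \<and> norm2_L2 M (EM M F u f) \<le> K * norm2_L2 M f" if "f \<in> L2 M" for f
  proof -
    have "0 \<le> norm2_L2 M f"
      by (simp add: norm2_L2_def)
    then have "C * norm2_L2 M f \<le> K * norm2_L2 M f"
      by (intro mult_right_mono) (simp_all add: K_def)
    with C[OF that] show ?thesis
      by simp
  qed
  have "AE x in M. nn_cond_exp M F (\<lambda>y. ennreal ((cmod (u y))\<^sup>2)) x \<le> ennreal K"
  proof (rule nn_cond_exp_norm_sq_le_of_truncations[OF assms(1)])
    fix n :: nat
    have "{x \<in> space M. cmod (u x) \<le> real n} \<in> sets M"
      by measurable
    then show "AE x in M. nn_cond_exp M F
        (\<lambda>y. ennreal (indicator {x \<in> space M. cmod (u x) \<le> real n} y * (cmod (u y))\<^sup>2)) x \<le> ennreal K"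
      by (rule nn_cond_exp_norm_sq_indicator_le[OF assms(1) _ _ K]) (auto simp: K_def)
  qed
  then show ?thesis
    by (rule that)
qed

lemma invariant_imp_nn_cond_exp_vanishes:
  assumes [measurable]: "u \<in> borel_measurable M" "C \<in> sets M"
    and K: "AE x in M. nn_cond_exp M F (\<lambda>y. ennreal ((cmod (u y))\<^sup>2)) x \<le> ennreal K"
    and inv: "\<And>f. f \<in> L2_on M C \<Longrightarrow> EM M F u f \<in> L2_on M C"
  shows "AE x in M. x \<notin> C \<longrightarrow> nn_cond_exp M F (\<lambda>y. indicator C y * ennreal ((cmod (u y))\<^sup>2)) x = 0"
proof -
  obtain B :: "nat \<Rightarrow> 'a set" where B: "\<And>k. B k \<in> sets F" "\<And>k. emeasure M (B k) < \<infinity>" "(\<Union>k. B k) = space M"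
    using finite_measure_F_cover by metis
  let ?p = "nn_cond_exp M F (\<lambda>y. indicator C y * ennreal ((cmod (u y))\<^sup>2))"
  have "AE x in M. ?p x \<le> nn_cond_exp M F (\<lambda>y. ennreal ((cmod (u y))\<^sup>2)) x"
    by (rule nn_cond_exp_mono) (auto simp: indicator_def)
  with K have p_fin: "AE x in M. ?p x < \<infinity>"
    by eventually_elim (simp add: le_less_trans)
  have "(\<lambda>y. indicator C y * ennreal ((cmod (u y))\<^sup>2)) = (\<lambda>y. ennreal (indicator C y * (cmod (u y))\<^sup>2))"
    by (intro ext) (simp add: indicator_def)
  then have p_real: "AE x in M. real_cond_exp M F (\<lambda>y. indicator C y * (cmod (u y))\<^sup>2) x = enn2real (?p x)"
    by (simp only:) (rule real_cond_exp_nonneg_eq; simp)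
  show ?thesis
  proof (rule AE_of_countable_cover[OF B(3)])
    fix k
    have [measurable]: "B k \<in> sets F"
      by (rule B(1))
    have [measurable]: "B k \<in> sets M"
      by (rule sets_F_subset_M) simp
    have "(\<integral>\<^sup>+x. ennreal (indicator (B k) x * (indicator C x * (cmod (u x))\<^sup>2)) \<partial>M)
        \<le> (\<integral>\<^sup>+x. indicator (B k) x * ennreal ((cmod (u x))\<^sup>2) \<partial>M)"
      by (rule nn_integral_mono) (simp add: indicator_def)
    also have "\<dots> \<le> ennreal K * emeasure M (B k)"
      by (rule set_nn_integral_le_of_nn_cond_exp_le[OF _ B(1) K]) measurable
    also have "\<dots> < \<infinity>"
      using B(2) by (simp add: ennreal_mult_less_top)
    finally have int: "integrable M (\<lambda>x. indicator (B k) x * (indicator C x * (cmod (u x))\<^sup>2))"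
      by (intro integrableI_nonneg) auto
    have "(\<lambda>x. indicator (B k \<inter> C) x * cnj (u x)) \<in> L2_on M C"
      using indicator_mult_cnj_in_L2[OF assms(1) \<open>B k \<in> sets M\<close> assms(2) int] by (simp add: L2_on_def)
    then have "AE x in M. x \<notin> C \<longrightarrow> EM M F u (\<lambda>y. indicator (B k \<inter> C) y * cnj (u y)) x = 0"
      using inv by (simp add: L2_on_def)
    with EM_indicator_mult_cnj[OF assms(1,2) \<open>B k \<in> sets F\<close> int] p_real p_fin
    show "AE x in M. x \<in> B k \<longrightarrow> x \<notin> C \<longrightarrow> ?p x = 0"
      by eventually_elim (auto simp: enn2real_eq_0_iff)
  qed
qed

lemma AE_nn_cond_exp_indicator_eq_if_eq_0:
  assumes [measurable]: "A \<in> sets M"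
  shows "AE x in M. nn_cond_exp M F (\<lambda>y. ennreal (indicator A y)) x = 0 \<or>
    nn_cond_exp M F (\<lambda>y. ennreal (indicator (space M - A) y)) x = 0 \<longrightarrow>
    nn_cond_exp M F (\<lambda>y. ennreal (indicator A y)) x = ennreal (indicator A x)"
proof -
  have "AE x in M. nn_cond_exp M F (\<lambda>y. indicator A y * 1) x
      + nn_cond_exp M F (\<lambda>y. indicator (space M - A) y * 1) x = nn_cond_exp M F (\<lambda>_. 1) x"
    by (rule nn_cond_exp_indicator_add_compl) measurable
  with nn_cond_exp_const[of 1] have sum: "AE x in M. nn_cond_exp M F (\<lambda>y. ennreal (indicator A y)) x
      + nn_cond_exp M F (\<lambda>y. ennreal (indicator (space M - A) y)) x = 1"
    by eventually_elim (simp add: ennreal_indicator)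
  have A: "AE x in M. nn_cond_exp M F (\<lambda>y. ennreal (indicator A y)) x = 0 \<longrightarrow> ennreal (indicator A x) = 0"
    and compl: "AE x in M. nn_cond_exp M F (\<lambda>y. ennreal (indicator (space M - A) y)) x = 0 \<longrightarrow>
      ennreal (indicator (space M - A) x) = 0"
    by (rule AE_eq_0_of_nn_cond_exp_eq_0; measurable)+
  from sum A compl AE_space show ?thesis
    by eventually_elim (auto simp: indicator_def)
qed

lemma reduces_imp_nn_cond_exp_indicator_eq:
  assumes [measurable]: "u \<in> borel_measurable M" "A \<in> sets M"
    and K: "AE x in M. nn_cond_exp M F (\<lambda>y. ennreal ((cmod (u y))\<^sup>2)) x \<le> ennreal K"
    and bounded: "bounded_on_L2 M (EM M F u)" and red: "reduces M (L2_on M A) (EM M F u)"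
  shows "AE x in M. nn_cond_exp M F (\<lambda>y. ennreal ((cmod (u y))\<^sup>2)) x \<noteq> 0 \<longrightarrow>
    nn_cond_exp M F (\<lambda>y. ennreal (indicator A y)) x = ennreal (indicator A x)"
proof -
  define p where "p = nn_cond_exp M F (\<lambda>y. indicator A y * ennreal ((cmod (u y))\<^sup>2))"
  define q where "q = nn_cond_exp M F (\<lambda>y. indicator (space M - A) y * ennreal ((cmod (u y))\<^sup>2))"
  have [measurable]: "p \<in> borel_measurable F" "q \<in> borel_measurable F"
    unfolding p_def q_def by measurable
  have T: "\<And>f. f \<in> L2 M \<Longrightarrow> EM M F u f \<in> L2 M"
    using bounded by (auto simp: bounded_on_L2_def)
  have p_off: "AE x in M. x \<notin> A \<longrightarrow> p x = 0"
    unfolding p_def by (rule invariant_imp_nn_cond_exp_vanishes[OF _ _ K]) (use red in \<open>auto simp: reduces_def\<close>)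
  have q_off: "AE x in M. x \<notin> space M - A \<longrightarrow> q x = 0"
    unfolding q_def
    by (rule invariant_imp_nn_cond_exp_vanishes[OF _ _ K]) (use reduces_imp_invariant_compl[OF _ T red] in auto)
  have "AE x in M. p x * nn_cond_exp M F (\<lambda>y. ennreal (indicator (space M - A) y)) x = 0"
    by (rule nn_cond_exp_mult_indicator_eq_0) (use p_off in \<open>auto elim: eventually_mono\<close>)
  moreover have "AE x in M. q x * nn_cond_exp M F (\<lambda>y. ennreal (indicator A y)) x = 0"
    by (rule nn_cond_exp_mult_indicator_eq_0) (use q_off AE_space in \<open>auto elim!: eventually_mono[OF AE_conjI]\<close>)
  moreover have "AE x in M. p x + q x = nn_cond_exp M F (\<lambda>y. ennreal ((cmod (u y))\<^sup>2)) x"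
    unfolding p_def q_def by (rule nn_cond_exp_indicator_add_compl) measurable
  ultimately show ?thesis
    using AE_nn_cond_exp_indicator_eq_if_eq_0[OF assms(2)] by eventually_elim (auto simp: mult_eq_0_iff)
qed

lemma EM_maps_L2_on:
  assumes [measurable]: "u \<in> borel_measurable M" "A \<in> sets M"
    and bounded: "bounded_on_L2 M (EM M F u)"
    and cond: "AE x in M. nn_cond_exp M F (\<lambda>y. ennreal ((cmod (u y))\<^sup>2)) x \<noteq> 0 \<longrightarrow>
      nn_cond_exp M F (\<lambda>y. ennreal (indicator A y)) x = ennreal (indicator A x)"
    and f: "f \<in> L2_on M A"
  shows "EM M F u f \<in> L2_on M A"
proof -
  let ?S = "nn_cond_exp M F (\<lambda>y. ennreal ((cmod (u y))\<^sup>2))"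
  let ?\<psi> = "\<lambda>y. ennreal (cmod (u y * f y))"
  have fL2: "f \<in> L2 M" and f_on: "AE x in M. x \<notin> A \<longrightarrow> f x = 0"
    using f by (simp_all add: L2_on_def)
  have [measurable]: "f \<in> borel_measurable M"
    using fL2 by (simp add: L2_def)
  have "AE x in M. ?S x \<noteq> 0 \<and> x \<notin> A \<longrightarrow> nn_cond_exp M F ?\<psi> x = 0"
    by (rule AE_nn_cond_exp_eq_0_outside[OF _ _ _ cond]) (use f_on in \<open>auto elim: eventually_mono\<close>)
  moreover have "AE x in M. ?S x = 0 \<longrightarrow> nn_cond_exp M F ?\<psi> x = 0"
    by (rule AE_nn_cond_exp_eq_0_mono) auto
  moreover have "AE x in M. nn_cond_exp M F ?\<psi> x = 0 \<longrightarrow> EM M F u f x = 0"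
    unfolding EM_def by (rule cond_exp_c_eq_0_of_nn_cond_exp_norm_eq_0) measurable
  ultimately have "AE x in M. x \<notin> A \<longrightarrow> EM M F u f x = 0"
    by eventually_elim blast
  with bounded fL2 show ?thesis
    by (auto simp: L2_on_def bounded_on_L2_def)
qed

lemma cnj_mult_cond_exp_c_in_L2_on:
  assumes [measurable]: "u \<in> borel_measurable M" "A \<in> sets M"
    and K: "AE x in M. nn_cond_exp M F (\<lambda>y. ennreal ((cmod (u y))\<^sup>2)) x \<le> ennreal K"
    and cond: "AE x in M. nn_cond_exp M F (\<lambda>y. ennreal ((cmod (u y))\<^sup>2)) x \<noteq> 0 \<longrightarrow>
      nn_cond_exp M F (\<lambda>y. ennreal (indicator A y)) x = ennreal (indicator A x)"
    and g: "g \<in> L2_on M A"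
  shows "(\<lambda>x. cnj (u x) * cond_exp_c M F g x) \<in> L2_on M A"
proof -
  let ?S = "nn_cond_exp M F (\<lambda>y. ennreal ((cmod (u y))\<^sup>2))"
  have gL2: "g \<in> L2 M" and g_on: "AE x in M. x \<notin> A \<longrightarrow> g x = 0"
    using g by (simp_all add: L2_on_def)
  have [measurable]: "g \<in> borel_measurable M"
    using gL2 by (simp add: L2_def)
  have "AE x in M. ?S x \<noteq> 0 \<and> x \<notin> A \<longrightarrow> nn_cond_exp M F (\<lambda>y. ennreal (cmod (g y))) x = 0"
    by (rule AE_nn_cond_exp_eq_0_outside[OF _ _ _ cond]) (use g_on in \<open>auto elim: eventually_mono\<close>)
  moreover have "AE x in M. nn_cond_exp M F (\<lambda>y. ennreal (cmod (g y))) x = 0 \<longrightarrow> cond_exp_c M F g x = 0"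
    by (rule cond_exp_c_eq_0_of_nn_cond_exp_norm_eq_0) simp
  moreover have "AE x in M. ?S x = 0 \<longrightarrow> ennreal ((cmod (u x))\<^sup>2) = 0"
    by (rule AE_eq_0_of_nn_cond_exp_eq_0) simp
  ultimately have "AE x in M. x \<notin> A \<longrightarrow> cnj (u x) * cond_exp_c M F g x = 0"
    by eventually_elim auto
  with cnj_mult_cond_exp_c_in_L2[OF _ K gL2] show ?thesis
    by (simp add: L2_on_def)
qed

lemma nn_cond_exp_indicator_eq_imp_reduces:
  assumes [measurable]: "u \<in> borel_measurable M" "A \<in> sets M"
    and K: "AE x in M. nn_cond_exp M F (\<lambda>y. ennreal ((cmod (u y))\<^sup>2)) x \<le> ennreal K"
    and bounded: "bounded_on_L2 M (EM M F u)"
    and cond: "AE x in M. nn_cond_exp M F (\<lambda>y. ennreal ((cmod (u y))\<^sup>2)) x \<noteq> 0 \<longrightarrow>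
      nn_cond_exp M F (\<lambda>y. ennreal (indicator A y)) x = ennreal (indicator A x)"
  shows "reduces M (L2_on M A) (EM M F u)"
  unfolding reduces_def
proof (intro conjI ballI)
  show "EM M F u f \<in> L2_on M A" if "f \<in> L2_on M A" for f
    by (rule EM_maps_L2_on[OF assms(1,2) bounded cond that])
  fix g assume g: "g \<in> L2_on M A"
  let ?h = "\<lambda>x. cnj (u x) * cond_exp_c M F g x"
  have "\<forall>f\<in>L2 M. inner_L2 M (EM M F u f) g = inner_L2 M f ?h"
  proof
    fix f assume "f \<in> L2 M"
    with bounded g cnj_mult_cond_exp_c_in_L2_on[OF assms(1,2) K cond g]
    show "inner_L2 M (EM M F u f) g = inner_L2 M f ?h"
      by (intro inner_L2_EM_adjoint) (auto simp: L2_on_def bounded_on_L2_def)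
  qed
  with cnj_mult_cond_exp_c_in_L2_on[OF assms(1,2) K cond g]
  show "\<exists>h\<in>L2_on M A. \<forall>f\<in>L2 M. inner_L2 M (EM M F u f) g = inner_L2 M f h"
    by blast
qed

end

theorem theorem2p3:
  fixes M F :: "'a measure" and u :: "'a \<Rightarrow> complex" and A :: "'a set"
  assumes "complete_measure M"
    and "sigma_finite_measure M"
    and "sigma_finite_subalgebra M F"
    and "u \<in> borel_measurable M"
    and "AE x in M. nn_cond_exp M F (\<lambda>y. ennreal (cmod (u y))) x < \<infinity>"
    and "bounded_on_L2 M (EM M F u)"
    and "A \<in> sets M"
  shows "reduces M (L2_on M A) (EM M F u) \<longleftrightarrow>
    (AE x in M. nn_cond_exp M F (\<lambda>y. ennreal ((cmod (u y))\<^sup>2)) x \<noteq> 0 \<longrightarrow>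
        nn_cond_exp M F (\<lambda>y. ennreal (indicator A y)) x = ennreal (indicator A x))"
proof -
  interpret sigma_finite_subalgebra M F
    by (rule assms(3))
  obtain K where K: "AE x in M. nn_cond_exp M F (\<lambda>y. ennreal ((cmod (u y))\<^sup>2)) x \<le> ennreal K"
    using nn_cond_exp_norm_sq_le_of_bounded[OF assms(4,6)] by blast
  show ?thesis
    using reduces_imp_nn_cond_exp_indicator_eq[OF assms(4,7) K assms(6)]
      nn_cond_exp_indicator_eq_imp_reduces[OF assms(4,7) K assms(6)] by blast
qed

end
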